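(* For every rational $m$ with $0<m<1$ there are infinitely many pairwise non-congruent hyperbolic Heron triangles having a right angle and whose area $A$ satisfies $\cos A=\frac{1-m^2}{1+m^2}$, $\sin A=\frac{2m}{1+m^2}$.
   Context: All triangles are non-degenerate, bounded triangles in the hyperbolic plane (curvature $-1$), with side lengths $a,b,c>0$, opposite angles $\alpha,\beta,\gamma>0$, and area $A=\pi-\alpha-\beta-\gamma$. A hyperbolic Heron triangle is one with $e^a,e^b,e^c\in\mathbb{Q}$ and $e^{i\alpha},e^{i\beta},e^{i\gamma},e^{iA}\in\mathbb{Q}[i]$. *)

theory Defs
  imports Complex_Main
begin

text \<open>A (non-degenerate, bounded) hyperbolic triangle is determined up to congruence by its
side lengths a, b, c; such a triangle exists iff the sides are positive and satisfy the
strict triangle inequalities.  Curvature -1.\<close>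

definition hyp_triangle :: "real \<Rightarrow> real \<Rightarrow> real \<Rightarrow> bool" where
  "hyp_triangle a b c \<longleftrightarrow> a > 0 \<and> b > 0 \<and> c > 0 \<and> a < b + c \<and> b < a + c \<and> c < a + b"

text \<open>Angle opposite the side a (hyperbolic law of cosines).\<close>
definition hyp_angle :: "real \<Rightarrow> real \<Rightarrow> real \<Rightarrow> real" where
  "hyp_angle a b c = arccos ((cosh b * cosh c - cosh a) / (sinh b * sinh c))"

definition hyp_area :: "real \<Rightarrow> real \<Rightarrow> real \<Rightarrow> real" where
  "hyp_area a b c = pi - hyp_angle a b c - hyp_angle b c a - hyp_angle c a b"

definition gauss_rat :: "complex \<Rightarrow> bool" where
  "gauss_rat z \<longleftrightarrow> Re z \<in> \<rat> \<and> Im z \<in> \<rat>"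

definition hyp_heron :: "real \<Rightarrow> real \<Rightarrow> real \<Rightarrow> bool" where
  "hyp_heron a b c \<longleftrightarrow> hyp_triangle a b c \<and>
     exp a \<in> \<rat> \<and> exp b \<in> \<rat> \<and> exp c \<in> \<rat> \<and>
     gauss_rat (cis (hyp_angle a b c)) \<and> gauss_rat (cis (hyp_angle b c a)) \<and>
     gauss_rat (cis (hyp_angle c a b)) \<and> gauss_rat (cis (hyp_area a b c))"

definition has_right_angle :: "real \<Rightarrow> real \<Rightarrow> real \<Rightarrow> bool" where
  "has_right_angle a b c \<longleftrightarrow>
     hyp_angle a b c = pi / 2 \<or> hyp_angle b c a = pi / 2 \<or> hyp_angle c a b = pi / 2"

text \<open>Congruence of triangles (SSS): same multiset of side lengths.\<close>
definition hyp_congruent :: "real \<times> real \<times> real \<Rightarrow> real \<times> real \<times> real \<Rightarrow> bool" where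
  "hyp_congruent t u \<longleftrightarrow> (case t of (a, b, c) \<Rightarrow> case u of (a', b', c') \<Rightarrow>
     (a', b', c') \<in> {(a,b,c), (a,c,b), (b,a,c), (b,c,a), (c,a,b), (c,b,a)})"

end

theory Submission
  imports Defs
begin

text \<open>Write \<open>p\<close>, \<open>q\<close>, \<open>r\<close> for \<open>tanh\<close> of half the sides of a right hyperbolic triangle with legs
  \<open>a\<close>, \<open>b\<close>. The Pythagorean relation \<open>cosh c = cosh a cosh b\<close> becomes
  \<open>r\<^sup>2 (1 + p\<^sup>2 q\<^sup>2) = p\<^sup>2 + q\<^sup>2\<close>, all trigonometric data of the triangle are rational functions
  of \<open>p\<close>, \<open>q\<close>, \<open>r\<close>, and the area satisfies \<open>tan (A/2) = p q\<close>. So it suffices to find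
  infinitely many rational solutions with \<open>p q = m\<close> and \<open>0 < q \<le> p < 1\<close>.

  With \<open>k = 1 + m\<^sup>2\<close> and \<open>n = 2 m k\<close>, such a solution is the same as a rational \<open>z = (k r)\<^sup>2 < k\<^sup>2\<close>
  for which \<open>z + n = k (p + q)\<^sup>2\<close> and \<open>z - n = k (p - q)\<^sup>2\<close>: an abscissa of a point of the
  congruent number curve \<open>E\<^sub>n: y\<^sup>2 = x\<^sup>3 - n\<^sup>2 x\<close> in a fixed 2-descent class. The point
  \<open>P = (k\<^sup>2, k\<^sup>2 (1 - m\<^sup>2))\<close> is in this class but gives the degenerate value \<open>r = 1\<close>. Under
  doubling, the 2-adic valuation of \<open>x/n\<close> drops by 2, so \<open>2P\<close> has infinite order and
  \<open>2E(\<rat>)\<close> has points of arbitrarily large abscissa; adding them to \<open>\<plusminus>P\<close> gives points of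
  the class of \<open>P\<close> accumulating at \<open>P\<close> from the left, i.e. values of \<open>r\<close> arbitrarily close to 1.\<close>

section \<open>Right hyperbolic triangles with rational \<open>tanh\<close> of half-sides\<close>

lemma hyp_angle_swap: "hyp_angle a b c = hyp_angle a c b"
  unfolding hyp_angle_def by (simp add: mult.commute)

lemma cosh_gt_one: "(x::real) \<noteq> 0 \<Longrightarrow> 1 < cosh x"
  using cosh_real_ge_1[of x] cosh_real_one_iff[of x] by linarith

lemma hyp_angle_hypotenuse:
  assumes "cosh c = cosh a * cosh b"
  shows "hyp_angle c a b = pi / 2"
  unfolding hyp_angle_def assms by simp

lemma hyp_triangle_of_cosh_eq:
  assumes "0 < a" "0 < b" "0 \<le> c" "cosh c = cosh a * cosh b"
  shows "hyp_triangle a b c" "a < c" "b < c"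
proof -
  have "cosh a < cosh c" "cosh b < cosh c"
    using assms cosh_gt_one[of a] cosh_gt_one[of b] cosh_real_pos[of a] cosh_real_pos[of b]
    by (simp_all add: mult_less_cancel_left1 mult_less_cancel_right1)
  then show ac: "a < c" and bc: "b < c"
    using assms cosh_real_nonneg_less_iff[of a c] cosh_real_nonneg_less_iff[of b c] by simp_all
  have "cosh c < cosh (a + b)" using assms by (simp add: cosh_add)
  then have "c < a + b" using assms cosh_real_nonneg_less_iff[of c "a + b"] by simp
  then show "hyp_triangle a b c" unfolding hyp_triangle_def using assms ac bc by linarith
qed

lemma cos_sin_hyp_angle_right:
  assumes "0 < a" "0 < b" "0 < c" "cosh c = cosh a * cosh b"
  shows "cos (hyp_angle a b c) = cosh a * sinh b / sinh c"
    "sin (hyp_angle a b c) = sinh a / sinh c"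
proof -
  define x where "x = cosh a * sinh b / sinh c"
  have "(cosh b * cosh c - cosh a) / (sinh b * sinh c) = cosh a * (cosh b^2 - 1) / (sinh b * sinh c)"
    using assms(4) by (simp add: power2_eq_square algebra_simps)
  also have "\<dots> = cosh a * sinh b^2 / (sinh b * sinh c)" by (simp add: sinh_square_eq)
  also have "\<dots> = x" unfolding x_def using assms(2) by (simp add: power2_eq_square)
  finally have angle: "hyp_angle a b c = arccos x" unfolding hyp_angle_def by simp
  have "sinh a^2 = sinh c^2 - (cosh a * sinh b)^2"
    using assms(4) by (simp add: sinh_square_eq power_mult_distrib algebra_simps)
  moreover have "sinh c \<noteq> 0" using assms(3) by simp
  ultimately have sq: "1 - x^2 = (sinh a / sinh c)^2"
    unfolding x_def power_divide by (simp add: field_simps)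
  then have "x^2 \<le> 1" by (metis diff_ge_0_iff_ge zero_le_power2)
  then have "\<bar>x\<bar> \<le> 1" by (simp add: abs_square_le_1)
  then show "cos (hyp_angle a b c) = cosh a * sinh b / sinh c" unfolding angle x_def[symmetric] by simp
  show "sin (hyp_angle a b c) = sinh a / sinh c"
    unfolding angle sin_arccos_abs[OF \<open>\<bar>x\<bar> \<le> 1\<close>] sq using assms by simp
qed

lemma exp_two_artanh: "\<bar>t\<bar> < 1 \<Longrightarrow> exp (2 * artanh t) = (1 + t) / (1 - t::real)"
  by (simp add: artanh_def divide_pos_pos)

lemma cosh_sinh_two_artanh:
  assumes "\<bar>t\<bar> < (1::real)"
  shows "cosh (2 * artanh t) = (1 + t^2) / (1 - t^2)" "sinh (2 * artanh t) = 2 * t / (1 - t^2)"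
proof -
  have t: "0 < 1 + t" "0 < 1 - t" using assms by auto
  have two: "2 * artanh t = ln ((1 + t) / (1 - t))" by (simp add: artanh_def)
  have inv: "inverse ((1 + t) / (1 - t)) = (1 - t) / (1 + t)" by simp
  have d: "(1 - t) * (1 + t) = 1 - t^2" by algebra
  have t2: "t^2 < 1" using assms by (simp add: abs_square_less_1)
  have "cosh (2 * artanh t) = ((1 + t) / (1 - t) + (1 - t) / (1 + t)) / 2"
    unfolding two cosh_ln_real[OF divide_pos_pos[OF t]] inv ..
  also have "\<dots> = ((1 + t) * (1 + t) + (1 - t) * (1 - t)) / ((1 - t) * (1 + t)) / 2"
    using t by (simp only: add_frac_eq less_irrefl not_False_eq_True)
  also have "(1 + t) * (1 + t) + (1 - t) * (1 - t) = 2 * (1 + t^2)" by algebra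
  finally show "cosh (2 * artanh t) = (1 + t^2) / (1 - t^2)" unfolding d using t2 by (simp add: field_simps)
  have "sinh (2 * artanh t) = ((1 + t) / (1 - t) - (1 - t) / (1 + t)) / 2"
    unfolding two sinh_ln_real[OF divide_pos_pos[OF t]] inv ..
  also have "\<dots> = ((1 + t) * (1 + t) - (1 - t) * (1 - t)) / ((1 - t) * (1 + t)) / 2"
    using t by (simp only: diff_frac_eq less_irrefl not_False_eq_True)
  also have "(1 + t) * (1 + t) - (1 - t) * (1 - t) = 2 * (2 * t)" by algebra
  finally show "sinh (2 * artanh t) = 2 * t / (1 - t^2)" unfolding d using t2 by (simp add: field_simps)
qed

lemma artanh_less_artanh:
  assumes "-1 < s" "s < t" "t < (1::real)"
  shows "artanh s < artanh t"
proof -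
  have "(1 + s) / (1 - s) < (1 + t) / (1 - t)" "0 < (1 + s) / (1 - s)"
    using assms by (simp_all add: field_simps)
  then show ?thesis unfolding artanh_def by simp
qed

lemma one_minus_plus_sq_param:
  fixes p q r :: real
  assumes "r^2 * (1 + p^2*q^2) = p^2 + q^2"
  shows "1 - r^2 = (1 - p^2) * (1 - q^2) / (1 + p^2*q^2)" "1 + r^2 = (1 + p^2) * (1 + q^2) / (1 + p^2*q^2)"
proof -
  have E: "0 < 1 + p^2*q^2" by (simp add: add_pos_nonneg)
  then have r2: "r^2 = (p^2 + q^2) / (1 + p^2*q^2)" using assms by (simp add: eq_divide_eq)
  show "1 - r^2 = (1 - p^2) * (1 - q^2) / (1 + p^2*q^2)" "1 + r^2 = (1 + p^2) * (1 + q^2) / (1 + p^2*q^2)"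
    unfolding r2 using E by (simp_all add: field_simps)
qed

context
  fixes p q r :: real
  assumes p: "0 < p" "p < 1" and q: "0 < q" "q < 1" and r: "0 < r"
    and pqr: "r^2 * (1 + p^2*q^2) = p^2 + q^2"
begin

lemma param_r_less_one: "r < 1"
proof -
  have "0 < (1 - p^2) * (1 - q^2) / (1 + p^2*q^2)"
    using p q by (simp add: add_pos_nonneg power_less_one_iff abs_square_less_1)
  then have "r^2 < 1" using one_minus_plus_sq_param(1)[OF pqr] by simp
  then show ?thesis using r by (simp add: power_less_one_iff)
qed

lemma param_abs_less_one: "\<bar>p\<bar> < 1" "\<bar>q\<bar> < 1" "\<bar>r\<bar> < 1"
  using p q r param_r_less_one by auto

lemma param_nonzero: "1 - p^2 \<noteq> 0" "1 - q^2 \<noteq> 0" "1 - r^2 \<noteq> 0" "1 + p^2*q^2 \<noteq> 0"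
proof -
  show "1 - p^2 \<noteq> 0" "1 - q^2 \<noteq> 0" "1 - r^2 \<noteq> 0"
    using param_abs_less_one abs_square_less_1[of p] abs_square_less_1[of q] abs_square_less_1[of r]
    by auto
  have "0 < 1 + p^2*q^2" by (simp add: add_pos_nonneg)
  then show "1 + p^2*q^2 \<noteq> 0" by simp
qed

lemma cosh_param_pythagoras:
  "cosh (2 * artanh r) = cosh (2 * artanh p) * cosh (2 * artanh q)"
proof -
  have "cosh (2 * artanh r) = (1 + r^2) / (1 - r^2)"
    using cosh_sinh_two_artanh(1) param_abs_less_one(3) .
  also have "\<dots> = (1 + p^2) * (1 + q^2) / ((1 - p^2) * (1 - q^2))"
    unfolding one_minus_plus_sq_param[OF pqr] using param_nonzero(4) by simp
  also have "\<dots> = cosh (2 * artanh p) * cosh (2 * artanh q)"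
    using param_abs_less_one by (simp add: cosh_sinh_two_artanh)
  finally show ?thesis .
qed

lemma param_sides_pos: "0 < 2 * artanh p" "0 < 2 * artanh q" "0 < 2 * artanh r"
  using artanh_less_artanh[of 0 p] artanh_less_artanh[of 0 q] artanh_less_artanh[of 0 r]
    p q r param_r_less_one by simp_all

lemma cos_sin_hyp_angle_param:
  "cos (hyp_angle (2 * artanh p) (2 * artanh q) (2 * artanh r)) = (1 + p^2) * q / ((1 + p^2*q^2) * r)"
  "sin (hyp_angle (2 * artanh p) (2 * artanh q) (2 * artanh r)) = p * (1 - q^2) / ((1 + p^2*q^2) * r)"
proof -
  note right = cos_sin_hyp_angle_right[OF param_sides_pos cosh_param_pythagoras]
  have sinh_r: "sinh (2 * artanh r) = 2 * r * (1 + p^2*q^2) / ((1 - p^2) * (1 - q^2))"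
    using cosh_sinh_two_artanh(2)[OF param_abs_less_one(3)] one_minus_plus_sq_param(1)[OF pqr] param_nonzero
    by simp
  have cancel: "A / X * (B / Y) / (C / (X * Y)) = A * B / C" "A / X / (C / (X * Y)) = A * Y / C"
    if "X \<noteq> 0" "Y \<noteq> 0" for A B C X Y :: real
    using that by (cases "C = 0"; simp add: field_simps)+
  have "cos (hyp_angle (2 * artanh p) (2 * artanh q) (2 * artanh r))
      = (1 + p^2) / (1 - p^2) * (2 * q / (1 - q^2)) / (2 * r * (1 + p^2*q^2) / ((1 - p^2) * (1 - q^2)))"
    unfolding right(1) sinh_r cosh_sinh_two_artanh[OF param_abs_less_one(1)]
      cosh_sinh_two_artanh[OF param_abs_less_one(2)] ..
  also have "\<dots> = (1 + p^2) * (2 * q) / (2 * r * (1 + p^2*q^2))"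
    by (rule cancel(1)[OF param_nonzero(1,2)])
  finally show "cos (hyp_angle (2 * artanh p) (2 * artanh q) (2 * artanh r)) = (1 + p^2) * q / ((1 + p^2*q^2) * r)"
    by (simp add: mult.commute mult.left_commute)
  have "sin (hyp_angle (2 * artanh p) (2 * artanh q) (2 * artanh r))
      = 2 * p / (1 - p^2) / (2 * r * (1 + p^2*q^2) / ((1 - p^2) * (1 - q^2)))"
    unfolding right(2) sinh_r cosh_sinh_two_artanh[OF param_abs_less_one(1)] ..
  also have "\<dots> = 2 * p * (1 - q^2) / (2 * r * (1 + p^2*q^2))"
    by (rule cancel(2)[OF param_nonzero(1,2)])
  finally show "sin (hyp_angle (2 * artanh p) (2 * artanh q) (2 * artanh r)) = p * (1 - q^2) / ((1 + p^2*q^2) * r)"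
    by (simp add: mult.commute mult.left_commute)
qed

end

lemma cos_sin_hyp_area_param:
  fixes p q r :: real
  assumes p: "0 < p" "p < 1" and q: "0 < q" "q < 1" and r: "0 < r"
    and pqr: "r^2 * (1 + p^2*q^2) = p^2 + q^2"
  defines "a \<equiv> 2 * artanh p" and "b \<equiv> 2 * artanh q" and "c \<equiv> 2 * artanh r"
  shows "cos (hyp_area a b c) = (1 - (p*q)^2) / (1 + (p*q)^2)"
    "sin (hyp_area a b c) = 2 * (p*q) / (1 + (p*q)^2)"
proof -
  define E where "E = 1 + p^2*q^2"
  have qpr: "r^2 * (1 + q^2*p^2) = q^2 + p^2" using pqr by (simp add: mult.commute add.commute)
  note \<alpha> = cos_sin_hyp_angle_param[OF p q r pqr, folded a_def b_def c_def E_def]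
  have swap: "hyp_angle b a c = hyp_angle b c a" by (rule hyp_angle_swap)
  note \<beta> = cos_sin_hyp_angle_param[OF q p r qpr, folded a_def b_def c_def, unfolded swap]
  have "hyp_angle c a b = pi / 2"
    using hyp_angle_hypotenuse[OF cosh_param_pythagoras[OF p q r pqr]] unfolding a_def b_def c_def .
  then have area: "hyp_area a b c = pi / 2 - (hyp_angle a b c + hyp_angle b c a)"
    unfolding hyp_area_def by simp
  have E: "E * r * (E * r) = E * (p^2 + q^2)" "q^2*p^2 = p^2*q^2"
    using pqr unfolding E_def by (algebra, simp add: mult.commute)
  have ne: "p^2 + q^2 \<noteq> 0" using p by (simp add: add_pos_nonneg)
  have frac: "x / D * (y / D) + z / D * (w / D) = (x * y + z * w) / (D * D)"
    "x / D * (y / D) - z / D * (w / D) = (x * y - z * w) / (D * D)" for x y z w D :: real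
    by (simp_all add: add_divide_distrib diff_divide_distrib)
  have "cos (hyp_area a b c) = (p * (1 - q^2) * ((1 + q^2) * p) + (1 + p^2) * q * (q * (1 - p^2))) / (E * r * (E * r))"
    unfolding area cos_diff sin_add \<alpha> \<beta> E(2) E_def[symmetric] frac(1) by simp
  also have "p * (1 - q^2) * ((1 + q^2) * p) + (1 + p^2) * q * (q * (1 - p^2)) = (p^2 + q^2) * (1 - p^2*q^2)"
    by algebra
  also have "(p^2 + q^2) * (1 - p^2*q^2) / (E * r * (E * r)) = (1 - p^2*q^2) / E"
    unfolding E(1) using ne by simp
  finally show "cos (hyp_area a b c) = (1 - (p*q)^2) / (1 + (p*q)^2)"
    using ne unfolding E_def by (simp add: power_mult_distrib)
  have "sin (hyp_area a b c) = ((1 + p^2) * q * ((1 + q^2) * p) - p * (1 - q^2) * (q * (1 - p^2))) / (E * r * (E * r))"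
    unfolding area sin_diff cos_add \<alpha> \<beta> E(2) E_def[symmetric] frac(2) by simp
  also have "(1 + p^2) * q * ((1 + q^2) * p) - p * (1 - q^2) * (q * (1 - p^2)) = (p^2 + q^2) * (2 * (p*q))"
    by algebra
  also have "(p^2 + q^2) * (2 * (p*q)) / (E * r * (E * r)) = 2 * (p*q) / E"
    unfolding E(1) using ne by simp
  finally show "sin (hyp_area a b c) = 2 * (p*q) / (1 + (p*q)^2)"
    using ne unfolding E_def by (simp add: power_mult_distrib)
qed

lemma gauss_rat_cis: "gauss_rat (cis x) \<longleftrightarrow> cos x \<in> \<rat> \<and> sin x \<in> \<rat>"
  by (simp add: gauss_rat_def)

lemma hyp_heron_param:
  fixes p q r :: real
  assumes Q: "p \<in> \<rat>" "q \<in> \<rat>" "r \<in> \<rat>"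
    and p: "0 < p" "p < 1" and q: "0 < q" "q < 1" and r: "0 < r"
    and pqr: "r^2 * (1 + p^2*q^2) = p^2 + q^2"
  defines "a \<equiv> 2 * artanh p" and "b \<equiv> 2 * artanh q" and "c \<equiv> 2 * artanh r"
  shows "hyp_heron a b c" "has_right_angle a b c" "a < c" "b < c"
proof -
  have qpr: "r^2 * (1 + q^2*p^2) = q^2 + p^2" using pqr by (simp add: mult.commute add.commute)
  have pyth: "cosh c = cosh a * cosh b"
    using cosh_param_pythagoras[OF p q r pqr] unfolding a_def b_def c_def .
  have pos: "0 < a" "0 < b" "0 < c"
    using param_sides_pos[OF p q r pqr] unfolding a_def b_def c_def by auto
  note tri = hyp_triangle_of_cosh_eq[OF pos(1,2) less_imp_le[OF pos(3)] pyth]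
  then show "a < c" "b < c" by auto
  have right: "hyp_angle c a b = pi / 2" using hyp_angle_hypotenuse[OF pyth] .
  then show "has_right_angle a b c" unfolding has_right_angle_def by simp
  have "\<bar>p\<bar> < 1" "\<bar>q\<bar> < 1" "\<bar>r\<bar> < 1" using param_abs_less_one[OF p q r pqr] by auto
  then have "exp a \<in> \<rat>" "exp b \<in> \<rat>" "exp c \<in> \<rat>"
    unfolding a_def b_def c_def using Q by (simp_all add: exp_two_artanh)
  moreover have "gauss_rat (cis (hyp_angle a b c))"
    using cos_sin_hyp_angle_param[OF p q r pqr] Q unfolding gauss_rat_cis a_def b_def c_def by simp
  moreover have "gauss_rat (cis (hyp_angle b c a))"
    using cos_sin_hyp_angle_param[OF q p r qpr] Q
    unfolding gauss_rat_cis a_def b_def c_def hyp_angle_swap[of "2 * artanh q" "2 * artanh r"] by simp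
  moreover have "gauss_rat (cis (hyp_angle c a b))" unfolding right gauss_rat_cis by simp
  moreover have "gauss_rat (cis (hyp_area a b c))"
    using cos_sin_hyp_area_param[OF p q r pqr] Q unfolding gauss_rat_cis a_def b_def c_def by simp
  ultimately show "hyp_heron a b c" unfolding hyp_heron_def using tri(1) by blast
qed

section \<open>2-adic valuations of rationals\<close>

definition has_v2 :: "real \<Rightarrow> int \<Rightarrow> bool" where
  "has_v2 x e \<longleftrightarrow> (\<exists>a b :: int. odd a \<and> odd b \<and> x = 2 powi e * a / b)"

lemma has_v2_nonzero: "has_v2 x e \<Longrightarrow> x \<noteq> 0"
  unfolding has_v2_def by auto

lemma power_int_two_split:
  assumes "e \<le> f" shows "(2::real) powi f = 2 powi e * 2 ^ nat (f - e)"
proof -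
  have "(2::real) powi f = 2 powi (e + int (nat (f - e)))" using assms by simp
  also have "\<dots> = 2 powi e * 2 powi int (nat (f - e))" by (rule power_int_add) simp
  finally show ?thesis by (simp only: power_int_of_nat)
qed

lemma has_v2_unique:
  assumes "has_v2 x e" "has_v2 x f" shows "e = f"
proof -
  have False if xe: "has_v2 x e" and xf: "has_v2 x f" and ef: "e < f" for e f
  proof -
    obtain a b where ab: "odd a" "odd b" "x = 2 powi e * a / b" using xe has_v2_def by auto
    obtain c d where cd: "odd c" "odd d" "x = 2 powi f * c / d" using xf has_v2_def by auto
    have "b \<noteq> 0" "d \<noteq> 0" using ab cd by auto
    then have "(2::real) powi e * (a * d) = 2 powi e * (2 ^ nat (f - e) * c * b)"
      using ab cd power_int_two_split[of e f] ef by (auto simp: field_simps)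
    then have "real_of_int (a * d) = real_of_int (2 ^ nat (f - e) * c * b)"
      by simp
    then have "a * d = 2 ^ nat (f - e) * c * b"
      by (rule of_int_eq_iff[THEN iffD1])
    moreover have "odd (a * d)" "even (2 ^ nat (f - e) * c * b)" using ab cd ef by auto
    ultimately show False by simp
  qed
  then show ?thesis using assms by (metis linorder_neq_iff)
qed

lemma has_v2_mult: assumes "has_v2 x e" "has_v2 y f" shows "has_v2 (x * y) (e + f)"
proof -
  obtain a b where ab: "odd a" "odd b" "x = 2 powi e * a / b" using assms(1) has_v2_def by auto
  obtain c d where cd: "odd c" "odd d" "y = 2 powi f * c / d" using assms(2) has_v2_def by auto
  have "x * y = 2 powi (e + f) * of_int (a * c) / of_int (b * d)"
    using ab(3) cd(3) by (simp add: power_int_add)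
  moreover have "odd (a * c)" "odd (b * d)" using ab cd by auto
  ultimately show ?thesis unfolding has_v2_def by blast
qed

lemma has_v2_divide: assumes "has_v2 x e" "has_v2 y f" shows "has_v2 (x / y) (e - f)"
proof -
  obtain a b where ab: "odd a" "odd b" "x = 2 powi e * a / b" using assms(1) has_v2_def by auto
  obtain c d where cd: "odd c" "odd d" "y = 2 powi f * c / d" using assms(2) has_v2_def by auto
  have "real_of_int b \<noteq> 0" "real_of_int c \<noteq> 0" "real_of_int d \<noteq> 0" "(2::real) powi f \<noteq> 0"
    using ab cd by auto
  then have "x / y = (2 powi e / 2 powi f) * (of_int a * of_int d) / (of_int b * of_int c)"
    unfolding ab(3) cd(3) by (simp add: divide_simps)
  then have "x / y = 2 powi (e - f) * of_int (a * d) / of_int (b * c)"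
    by (simp add: power_int_diff)
  moreover have "odd (a * d)" "odd (b * c)" using ab cd by auto
  ultimately show ?thesis unfolding has_v2_def by blast
qed

lemma has_v2_add_less: assumes "has_v2 x e" "has_v2 y f" "e < f" shows "has_v2 (x + y) e"
proof -
  obtain a b where ab: "odd a" "odd b" "x = 2 powi e * a / b" using assms(1) has_v2_def by auto
  obtain c d where cd: "odd c" "odd d" "y = 2 powi f * c / d" using assms(2) has_v2_def by auto
  have "real_of_int b \<noteq> 0" "real_of_int d \<noteq> 0" using ab cd by auto
  then have "x + y = 2 powi e * of_int (a * d + 2 ^ nat (f - e) * c * b) / of_int (b * d)"
    using ab cd power_int_two_split[of e f] assms(3)
    by (simp add: field_simps)
  moreover have "odd (a * d + 2 ^ nat (f - e) * c * b)" "odd (b * d)" using ab cd assms(3) by auto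
  ultimately show ?thesis unfolding has_v2_def by blast
qed

lemma has_v2_uminus: "has_v2 x e \<Longrightarrow> has_v2 (- x) e"
  unfolding has_v2_def by (metis minus_divide_left mult_minus_right even_minus of_int_minus)

lemma has_v2_pow2_mult_odd: "odd a \<Longrightarrow> has_v2 (2 ^ k * of_int a) (int k)"
  unfolding has_v2_def by (rule exI[of _ a], rule exI[of _ 1]) auto

lemma has_v2_odd: "odd a \<Longrightarrow> has_v2 (of_int a) 0"
  using has_v2_pow2_mult_odd[of a 0] by simp

lemma has_v2_one: "has_v2 1 0"
  using has_v2_odd[of 1] by simp

lemma int_pow2_mult_odd_decomp: "(z::int) \<noteq> 0 \<Longrightarrow> \<exists>k w. odd w \<and> z = 2 ^ k * w"
proof (induction "nat \<bar>z\<bar>" arbitrary: z rule: less_induct)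
  case less
  show ?case
  proof (cases "odd z")
    case True
    then show ?thesis by (rule_tac x=0 in exI) auto
  next
    case False
    then obtain z' where z': "z = 2 * z'" by auto
    with less.prems have "z' \<noteq> 0" "nat \<bar>z'\<bar> < nat \<bar>z\<bar>" by auto
    then obtain k w where "odd w" "z' = 2 ^ k * w" using less.hyps by blast
    then show ?thesis using z' by (rule_tac x="Suc k" in exI) auto
  qed
qed

lemma has_v2_of_int_pow2_dvd:
  assumes "z \<noteq> 0" "2 ^ j dvd z" shows "\<exists>e \<ge> int j. has_v2 (of_int z) e"
proof -
  obtain k w where w: "odd w" "z = 2 ^ k * w"
    using int_pow2_mult_odd_decomp assms(1) by blast
  have "j \<le> k"
  proof (rule ccontr)
    assume "\<not> j \<le> k"
    then have "2 ^ Suc k dvd z" using assms(2) by (meson dvd_trans le_imp_power_dvd not_less_eq_eq)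
    then show False using w by simp
  qed
  moreover have "has_v2 (of_int z) (int k)"
    using has_v2_pow2_mult_odd[of w k] w by simp
  ultimately show ?thesis by (intro exI[of _ "int k"]) simp
qed

lemma odd_square_mod4: "odd (a::int) \<Longrightarrow> \<exists>u. a^2 = 4*u + 1"
proof -
  assume "odd a"
  then obtain s where "a = 2*s + 1" by (meson oddE)
  then show ?thesis by (intro exI[of _ "s^2 + s"]) (simp add: power2_eq_square algebra_simps)
qed

lemma has_v2_int_sq_quotient:
  assumes "has_v2 (of_int N) a" "has_v2 (of_int D) d"
  shows "has_v2 (of_int (N^2) / of_int D) (2*a - d)"
  using has_v2_divide[OF has_v2_mult[OF assms(1,1)] assms(2)] by (simp add: power2_eq_square)

lemma has_v2_doubling_quotient_int:
  fixes A B :: int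
  assumes "A \<noteq> 0" "B \<noteq> 0" "A^2 \<noteq> B^2" "coprime A B"
  shows "\<exists>e<0. has_v2 (of_int ((B^4 + 6*A^2*B^2 + A^4)^2) / of_int (8*A*B*(A^2+B^2)*(B^2-A^2)^2)) e"
proof -
  define N where "N = B^4 + 6*A^2*B^2 + A^4"
  define D where "D = 8*A*B*(A^2+B^2)*(B^2-A^2)^2"
  have "A^2 + B^2 > 0" using assms(1) by (simp add: add_pos_nonneg)
  then have D0: "D \<noteq> 0" unfolding D_def using assms by auto
  show ?thesis
  proof (cases "odd A \<and> odd B")
    case True
    obtain u w where uw: "A^2 = 4*u + 1" "B^2 = 4*w + 1" using odd_square_mod4 True by meson
    have "N = 2^3 * (1 + 2*w^2 + 4*w + 12*u*w + 4*u + 2*u^2)"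
    proof -
      have "N = (B^2)^2 + 6*A^2*B^2 + (A^2)^2" unfolding N_def by algebra
      then show ?thesis unfolding uw by algebra
    qed
    then have vN: "has_v2 (of_int N) 3"
      using has_v2_pow2_mult_odd[of "1 + 2*w^2 + 4*w + 12*u*w + 4*u + 2*u^2" 3] by simp
    have "B^2 - A^2 = 4*(w - u)" using uw by simp
    then have "D = 2^7 * (A*B*(A^2+B^2)*(w-u)^2)" unfolding D_def by algebra
    then obtain d where "d \<ge> 7" "has_v2 (of_int D) d"
      using has_v2_of_int_pow2_dvd[OF D0, of 7] by auto
    then have "2*3 - d < 0" "has_v2 (of_int (N^2) / of_int D) (2*3 - d)"
      using has_v2_int_sq_quotient[OF vN] by auto
    then show ?thesis unfolding N_def D_def by blast
  next
    case False
    have "odd A \<or> odd B"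
      using assms(4) by (metis coprime_common_divisor dvd_mult_right even_numeral odd_one
          numeral_Bit0_eq_double dvd_refl)
    then have "odd N" using False unfolding N_def by auto
    then have vN: "has_v2 (of_int N) 0" by (rule has_v2_odd)
    have "D = 2^3 * (A*B*(A^2+B^2)*(B^2-A^2)^2)" unfolding D_def by simp
    then obtain d where "d \<ge> 3" "has_v2 (of_int D) d"
      using has_v2_of_int_pow2_dvd[OF D0, of 3] by auto
    then have "2*0 - d < 0" "has_v2 (of_int (N^2) / of_int D) (2*0 - d)"
      using has_v2_int_sq_quotient[OF vN] by auto
    then show ?thesis unfolding N_def D_def by blast
  qed
qed

text \<open>The quotient is \<open>x(2P)/n\<close> for the point \<open>P\<close> of the last section.\<close>
lemma has_v2_doubling_quotient:
  assumes "m \<in> \<rat>" "m \<noteq> 0" "m^2 \<noteq> 1"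
  shows "\<exists>e<0. has_v2 ((1 + 6*m^2 + m^4)^2 / (8*m*(1+m^2)*(1-m^2)^2)) e"
proof -
  obtain A B where AB: "B > 0" "coprime A B" "m = of_int A / of_int B"
    using Rats_cases'[OF assms(1)] by blast
  define a where "a = real_of_int A"
  define b where "b = real_of_int B"
  have ab: "a \<noteq> 0" "b > 0" "m = a / b" using AB assms(2) unfolding a_def b_def by auto
  have "A \<noteq> 0" "B \<noteq> 0" using ab unfolding a_def b_def by auto
  moreover have "A^2 \<noteq> B^2"
  proof
    assume "A^2 = B^2"
    then have "a^2 = b^2" unfolding a_def b_def by (metis of_int_power)
    then show False using assms(3) ab by (simp add: power_divide)
  qed
  moreover have "(1 + 6*m^2 + m^4)^2 / (8*m*(1+m^2)*(1-m^2)^2)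
      = (b^4 + 6*a^2*b^2 + a^4)^2 / (8*a*b*(a^2+b^2)*(b^2-a^2)^2)"
  proof -
    have "1 + 6*m^2 + m^4 = (b^4 + 6*a^2*b^2 + a^4) / b^4"
      unfolding ab(3) using ab by (simp add: power_divide field_simps eval_nat_numeral)
    moreover have "8*m*(1+m^2)*(1-m^2)^2 = 8*a*b*(a^2+b^2)*(b^2-a^2)^2 / b^8"
      unfolding ab(3) using ab by (simp add: power_divide field_simps eval_nat_numeral)
    ultimately show ?thesis using ab by (simp add: power_divide eval_nat_numeral)
  qed
  ultimately show ?thesis
    using has_v2_doubling_quotient_int[of A B] AB(2) unfolding a_def b_def by simp
qed

section \<open>Chords, doubling and 2-descent on the congruent number curve\<close>

definition on_cubic :: "real \<Rightarrow> real \<Rightarrow> real \<Rightarrow> real \<Rightarrow> bool" where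
  "on_cubic a b x y \<longleftrightarrow> y^2 = x^3 + a*x^2 + b*x"

abbreviation on_cn_curve :: "real \<Rightarrow> real \<Rightarrow> real \<Rightarrow> bool" where
  "on_cn_curve n \<equiv> on_cubic 0 (-(n^2))"

lemma on_cubic_chord:
  assumes c1: "on_cubic a b x1 y1" and c2: "on_cubic a b x2 y2" and ne: "x1 \<noteq> x2"
    and l: "l = (y2 - y1)/(x2 - x1)" and \<nu>: "\<nu> = y1 - l*x1" and x3: "x3 = l^2 - a - x1 - x2"
  shows "x1*x2*x3 = \<nu>^2" "on_cubic a b x3 (-(l*x3 + \<nu>))"
proof -
  have e1: "y1 = l*x1 + \<nu>" using \<nu> by simp
  have e2: "y2 = l*x2 + \<nu>" using l \<nu> ne by (simp add: field_simps)
  have F1: "x1^3 + a*x1^2 + b*x1 - (l*x1 + \<nu>)^2 = 0" using c1 e1 unfolding on_cubic_def by simp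
  have F2: "x2^3 + a*x2^2 + b*x2 - (l*x2 + \<nu>)^2 = 0" using c2 e2 unfolding on_cubic_def by simp
  define H where "H = x1^2 + x1*x2 + x2^2 + a*(x1+x2) + b - l^2*(x1+x2) - 2*l*\<nu>"
  have "(x1 - x2) * H = (x1^3 + a*x1^2 + b*x1 - (l*x1 + \<nu>)^2) - (x2^3 + a*x2^2 + b*x2 - (l*x2 + \<nu>)^2)"
    unfolding H_def by algebra
  then have H0: "H = 0" using F1 F2 ne by simp
  have "\<nu>^2 - x1*x2*x3 = x1 * H - (x1^3 + a*x1^2 + b*x1 - (l*x1 + \<nu>)^2)"
    unfolding H_def x3 by algebra
  then show N: "x1*x2*x3 = \<nu>^2" using H0 F1 by simp
  have "x3^3 + a*x3^2 + b*x3 - (l*x3 + \<nu>)^2 = x3 * H + (x1*x2*x3 - \<nu>^2)"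
    unfolding H_def x3 by algebra
  then show "on_cubic a b x3 (-(l*x3 + \<nu>))"
    using H0 N unfolding on_cubic_def by (simp add: power2_eq_square algebra_simps)
qed

lemma on_cn_curve_shift:
  assumes "on_cn_curve n x y"
  shows "on_cubic (-3*n) (2*n^2) (x + n) y" "on_cubic (3*n) (2*n^2) (x - n) y"
  using assms unfolding on_cubic_def by (simp_all add: algebra_simps power2_eq_square power3_eq_cube)

text \<open>Translating \<open>E\<^sub>n\<close> by \<open>\<plusminus>n\<close> gives the relation for the factors \<open>x \<plusminus> n\<close> as well.\<close>
lemma cn_chord:
  assumes c1: "on_cn_curve n x1 y1" and c2: "on_cn_curve n x2 y2" and ne: "x1 \<noteq> x2"
    and l: "l = (y2 - y1)/(x2 - x1)" and \<nu>: "\<nu> = y1 - l*x1" and x3: "x3 = l^2 - x1 - x2"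
  shows "x1*x2*x3 = \<nu>^2" "(x1+n)*(x2+n)*(x3+n) = (\<nu> - l*n)^2"
    "(x1-n)*(x2-n)*(x3-n) = (\<nu> + l*n)^2" "on_cn_curve n x3 (-(l*x3 + \<nu>))"
proof -
  show "x1*x2*x3 = \<nu>^2" "on_cn_curve n x3 (-(l*x3 + \<nu>))"
    using on_cubic_chord[OF c1 c2 ne l \<nu>] x3 by auto
  have l': "l = (y2 - y1)/((x2 + n) - (x1 + n))" "l = (y2 - y1)/((x2 - n) - (x1 - n))"
    using l by simp_all
  have \<nu>': "\<nu> - l*n = y1 - l*(x1 + n)" "\<nu> + l*n = y1 - l*(x1 - n)"
    using \<nu> by (simp_all add: algebra_simps)
  have x3': "x3 + n = l^2 - (-3*n) - (x1 + n) - (x2 + n)" "x3 - n = l^2 - 3*n - (x1 - n) - (x2 - n)"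
    using x3 by simp_all
  show "(x1+n)*(x2+n)*(x3+n) = (\<nu> - l*n)^2"
    using on_cubic_chord(1)[OF on_cn_curve_shift(1)[OF c1] on_cn_curve_shift(1)[OF c2] _ l'(1) \<nu>'(1) x3'(1)]
      ne by simp
  show "(x1-n)*(x2-n)*(x3-n) = (\<nu> + l*n)^2"
    using on_cubic_chord(1)[OF on_cn_curve_shift(2)[OF c1] on_cn_curve_shift(2)[OF c2] _ l'(2) \<nu>'(2) x3'(2)]
      ne by simp
qed

definition cn_double :: "real \<Rightarrow> real \<times> real \<Rightarrow> real \<times> real" where
  "cn_double n = (\<lambda>(x, y). let l = (3*x^2 - n^2)/(2*y); x' = l^2 - 2*x in (x', l*(x - x') - y))"

lemma cn_double_formulas:
  assumes c: "on_cn_curve n x y" and y0: "y \<noteq> 0" and xy': "cn_double n (x, y) = (x', y')"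
  shows "x' = ((x^2 + n^2)/(2*y))^2" "x' - n = ((x^2 - 2*n*x - n^2)/(2*y))^2"
    "x' + n = ((x^2 + 2*n*x - n^2)/(2*y))^2" "on_cn_curve n x' y'"
proof -
  define l where "l = (3*x^2 - n^2)/(2*y)"
  have x': "x' = l^2 - 2*x" and y': "y' = l*(x - x') - y"
    using xy' unfolding cn_double_def l_def Let_def by auto
  have Y: "y^2 = x^3 - n^2*x" using c unfolding on_cubic_def by simp
  have "x' = ((3*x^2 - n^2)^2 - 8*x*y^2)/(4*y^2)" unfolding x' l_def using y0
    by (simp add: field_simps power2_eq_square)
  also have "(3*x^2 - n^2)^2 - 8*x*y^2 = (x^2 + n^2)^2" unfolding Y by algebra
  finally show X: "x' = ((x^2 + n^2)/(2*y))^2" by (simp add: power_divide power_mult_distrib)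
  have "x' - n = ((x^2 + n^2)^2 - 4*n*y^2)/(4*y^2)" unfolding X using y0
    by (simp add: field_simps power2_eq_square)
  also have "(x^2 + n^2)^2 - 4*n*y^2 = (x^2 - 2*n*x - n^2)^2" unfolding Y by algebra
  finally show "x' - n = ((x^2 - 2*n*x - n^2)/(2*y))^2" by (simp add: power_divide power_mult_distrib)
  have "x' + n = ((x^2 + n^2)^2 + 4*n*y^2)/(4*y^2)" unfolding X using y0
    by (simp add: field_simps power2_eq_square)
  also have "(x^2 + n^2)^2 + 4*n*y^2 = (x^2 + 2*n*x - n^2)^2" unfolding Y by algebra
  finally show "x' + n = ((x^2 + 2*n*x - n^2)/(2*y))^2" by (simp add: power_divide power_mult_distrib)
  define L where "L = 3*x^2 - n^2"
  define N where "N = (x^2 + n^2)^2"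
  have X': "x' = N/(4*y^2)" unfolding X N_def by (simp add: power_divide power_mult_distrib)
  have Y': "y' = (L*(4*y^2*x - N) - 8*y^4)/(8*y^3)" unfolding y' X' l_def L_def using y0
    by (simp add: field_simps power2_eq_square power3_eq_cube eval_nat_numeral)
  have "(L*(4*y^2*x - N) - 8*y^4)^2 = N^3 - 16*n^2*N*y^4"
  proof -
    have "y^4 = (y^2)^2" by simp
    then show ?thesis unfolding L_def N_def Y by algebra
  qed
  then have "y'^2 = (N^3 - 16*n^2*N*y^4)/(64*y^6)"
    unfolding Y' by (simp add: power_divide power_mult_distrib)
  also have "\<dots> = x'^3 - n^2*x'" unfolding X' using y0 by (simp add: field_simps)
  finally show "on_cn_curve n x' y'" unfolding on_cubic_def by simp
qed

definition rat_cn_point :: "real \<Rightarrow> real \<Rightarrow> real \<Rightarrow> bool" where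
  "rat_cn_point n x y \<longleftrightarrow> on_cn_curve n x y \<and> x \<in> \<rat> \<and> y \<in> \<rat>"

definition in_square_class :: "real \<Rightarrow> real \<Rightarrow> bool" where
  "in_square_class k t \<longleftrightarrow> (\<exists>r\<in>\<rat>. t = k * r^2)"

lemma in_square_class_product:
  assumes "in_square_class k A" "in_square_class 1 B" "A \<noteq> 0" "B \<noteq> 0"
    and "k \<in> \<rat>" "\<nu> \<in> \<rat>" "A * B * C = \<nu>^2"
  shows "in_square_class k C"
proof -
  obtain a where a: "a \<in> \<rat>" "A = k * a^2" using assms(1) in_square_class_def by auto
  obtain b where b: "b \<in> \<rat>" "B = b^2" using assms(2) in_square_class_def by auto
  have "k \<noteq> 0" "a \<noteq> 0" "b \<noteq> 0" using a b assms(3,4) by auto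
  then have "C = k * (\<nu>/(k*a*b))^2"
    using assms(7) a b by (simp add: field_simps power2_eq_square)
  then show ?thesis unfolding in_square_class_def using a b assms(5,6) by (intro bexI[of _ "\<nu>/(k*a*b)"]) auto
qed

text \<open>The classes of \<open>x\<close>, \<open>x - n\<close>, \<open>x + n\<close> modulo rational squares form the 2-descent image of a
  point of \<open>E\<^sub>n\<close>; the classes \<open>(1, k, k)\<close> are encoded by \<open>descent_class n k\<close>, and \<open>k = 1\<close> is
  the image of the doubles.\<close>
definition descent_class :: "real \<Rightarrow> real \<Rightarrow> real \<Rightarrow> bool" where
  "descent_class n k x \<longleftrightarrow>
     in_square_class 1 x \<and> in_square_class k (x - n) \<and> in_square_class k (x + n)"

lemma descent_class_double:
  assumes "rat_cn_point n x y" "y \<noteq> 0" "n \<in> \<rat>" "cn_double n (x, y) = (x', y')"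
  shows "rat_cn_point n x' y'" "descent_class n 1 x'"
proof -
  note F = cn_double_formulas[OF _ assms(2,4)]
  have Q: "x \<in> \<rat>" "y \<in> \<rat>" using assms(1) unfolding rat_cn_point_def by auto
  then show "rat_cn_point n x' y'"
    using assms F(4) unfolding rat_cn_point_def cn_double_def Let_def by auto
  have "(x^2 + n^2)/(2*y) \<in> \<rat>" "(x^2 - 2*n*x - n^2)/(2*y) \<in> \<rat>" "(x^2 + 2*n*x - n^2)/(2*y) \<in> \<rat>"
    using Q assms(3) by auto
  then show "descent_class n 1 x'" unfolding descent_class_def in_square_class_def
    using F(1-3) assms(1) unfolding rat_cn_point_def by auto
qed

text \<open>The descent map is a homomorphism: collinear points have classes multiplying to a square.\<close>
lemma descent_class_chord:
  assumes P1: "rat_cn_point n x1 y1" and P2: "rat_cn_point n x2 y2" and ne: "x1 \<noteq> x2"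
    and l: "l = (y2 - y1)/(x2 - x1)" and \<nu>: "\<nu> = y1 - l*x1" and x3: "x3 = l^2 - x1 - x2"
    and Q: "n \<in> \<rat>" "k \<in> \<rat>" and nz: "x1 \<notin> {-n, 0, n}" "x2 \<notin> {-n, 0, n}"
    and d1: "descent_class n k x1" and d2: "descent_class n 1 x2"
  shows "rat_cn_point n x3 (-(l*x3 + \<nu>))" "descent_class n k x3"
proof -
  have c: "on_cn_curve n x1 y1" "on_cn_curve n x2 y2" and Q': "x1 \<in> \<rat>" "y1 \<in> \<rat>" "x2 \<in> \<rat>" "y2 \<in> \<rat>"
    using P1 P2 unfolding rat_cn_point_def by auto
  note C = cn_chord[OF c ne l \<nu> x3]
  have "l \<in> \<rat>" "\<nu> \<in> \<rat>" unfolding l \<nu> using Q' by auto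
  then have R: "\<nu> - l*n \<in> \<rat>" "\<nu> + l*n \<in> \<rat>" "x3 \<in> \<rat>" using Q Q' x3 by auto
  then show "rat_cn_point n x3 (-(l*x3 + \<nu>))"
    using C(4) \<open>l \<in> \<rat>\<close> \<open>\<nu> \<in> \<rat>\<close> unfolding rat_cn_point_def by auto
  have "x1 \<noteq> 0" "x1 - n \<noteq> 0" "x1 + n \<noteq> 0" "x2 \<noteq> 0" "x2 - n \<noteq> 0" "x2 + n \<noteq> 0"
    using nz by auto
  with d1 d2 show "descent_class n k x3"
    unfolding descent_class_def
    using in_square_class_product[of _ x1 x2, OF _ _ _ _ _ _ C(1)]
      in_square_class_product[of _ "x1 + n" "x2 + n", OF _ _ _ _ _ _ C(2)]
      in_square_class_product[of _ "x1 - n" "x2 - n", OF _ _ _ _ _ _ C(3)]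
      \<open>\<nu> \<in> \<rat>\<close> R Q by auto
qed

section \<open>Points of \<open>2E(\<rat>)\<close> with large abscissa\<close>

lemma has_v2_doubling_map:
  assumes "has_v2 \<xi> e" "e < 0"
  shows "has_v2 ((\<xi>^2 + 1)^2 / (4*\<xi>*(\<xi>^2 - 1))) (e - 2)"
proof -
  have sq: "has_v2 (\<xi>^2) (2*e)" using has_v2_mult[OF assms(1,1)] by (simp add: power2_eq_square)
  have "has_v2 (\<xi>^2 + 1) (2*e)" using has_v2_add_less[OF sq has_v2_one] assms(2) by simp
  then have num: "has_v2 ((\<xi>^2 + 1)^2) (4*e)" using has_v2_mult by (fastforce simp: power2_eq_square)
  have four: "has_v2 4 2" using has_v2_pow2_mult_odd[of 1 2] by simp
  have "has_v2 (\<xi>^2 - 1) (2*e)"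
    using has_v2_add_less[OF sq has_v2_uminus[OF has_v2_one]] assms(2) by simp
  from has_v2_mult[OF has_v2_mult[OF four assms(1)] this]
  have "has_v2 (4*\<xi>*(\<xi>^2 - 1)) (2 + e + 2*e)" .
  from has_v2_divide[OF num this] show ?thesis by simp
qed

lemma cn_double_quotient:
  assumes c: "on_cn_curve n x y" and "y \<noteq> 0" "n \<noteq> 0"
  shows "((x^2 + n^2)/(2*y))^2 / n = ((x/n)^2 + 1)^2 / (4*(x/n)*((x/n)^2 - 1))"
proof -
  have Y: "y^2 = x*(x^2 - n^2)" using c unfolding on_cubic_def by (simp add: algebra_simps power2_eq_square power3_eq_cube)
  have "((x^2 + n^2)/(2*y))^2 / n = (x^2 + n^2)^2 / (4*y^2*n)"
    by (simp add: power_divide power_mult_distrib)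
  also have "\<dots> = (x^2 + n^2)^2 / (4*x*(x^2 - n^2)*n)" unfolding Y by (simp add: algebra_simps)
  also have "\<dots> = ((x/n)^2 + 1)^2 / (4*(x/n)*((x/n)^2 - 1))"
  proof -
    have e1: "((x/n)^2 + 1)^2 = (x^2 + n^2)^2 / n^4"
      using assms(3) by (simp add: field_simps power2_eq_square eval_nat_numeral)
    have e2: "4*(x/n)*((x/n)^2 - 1) = 4*x*(x^2 - n^2) / n^3"
      using assms(3) by (simp add: field_simps power2_eq_square power3_eq_cube)
    have "(x^2 + n^2)^2 / n^4 / (4*x*(x^2 - n^2) / n^3) = (x^2 + n^2)^2 / (4*x*(x^2 - n^2)) * (n^3 / n^4)"
      by (simp add: divide_simps)
    also have "n^3 / n^4 = 1 / n" using assms(3) by (simp add: eval_nat_numeral)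
    finally show ?thesis unfolding e1 e2 by simp
  qed
  finally show ?thesis .
qed

lemma cn_y_nonzero:
  assumes "on_cn_curve n x y" "has_v2 (x/n) e" "e \<noteq> 0" "n \<noteq> 0"
  shows "y \<noteq> 0"
proof
  assume "y = 0"
  moreover have "x * (x - n) * (x + n) = x^3 - n^2*x" by algebra
  ultimately have "x * (x - n) * (x + n) = 0"
    using assms(1) unfolding on_cubic_def by simp
  then have "x = 0 \<or> x = n \<or> x = -n"
    by (simp only: mult_eq_0_iff add_eq_0_iff2 right_minus_eq disj_assoc)
  then have "x/n \<in> {0, 1, -1}" using assms(4) by auto
  moreover have "\<not> has_v2 0 e" "\<not> has_v2 1 e" "\<not> has_v2 (-1) e"
    using has_v2_nonzero has_v2_unique[OF _ has_v2_one] has_v2_unique[OF _ has_v2_uminus[OF has_v2_one]]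
      assms(3) by blast+
  ultimately show False using assms(2) by auto
qed

lemma inj_bounded_seq_close_terms:
  fixes f :: "nat \<Rightarrow> real"
  assumes bnd: "\<And>j. lo \<le> f j \<and> f j \<le> hi" and "inj f" and "\<delta> > 0"
  shows "\<exists>i j. i \<noteq> j \<and> \<bar>f i - f j\<bar> < \<delta>"
proof -
  define h where "h j = \<lfloor>(f j - lo)/\<delta>\<rfloor>" for j
  have "range h \<subseteq> {0..\<lfloor>(hi - lo)/\<delta>\<rfloor>}"
    unfolding h_def using bnd \<open>\<delta> > 0\<close> by (auto intro!: floor_mono divide_right_mono)
  then have "finite (range h)" by (rule finite_subset) simp
  then have "\<not> inj h" using finite_imageD infinite_UNIV_nat by blast
  then obtain i j where ij: "i \<noteq> j" "h i = h j" unfolding inj_def by blast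
  then have "\<bar>(f i - lo)/\<delta> - (f j - lo)/\<delta>\<bar> < 1" unfolding h_def
    by (smt (verit) floor_eq_iff)
  then have "\<bar>f i - f j\<bar> < \<delta>" using \<open>\<delta> > 0\<close> by (simp add: diff_divide_distrib[symmetric])
  then show ?thesis using ij by blast
qed

lemma cn_double_x_large:
  assumes "on_cn_curve n x y" "y \<noteq> 0" "0 \<le> K" "2 * sqrt (K + 1) * \<bar>y\<bar> < n^2"
  shows "K < fst (cn_double n (x, y))"
proof -
  obtain x' y' where xy': "cn_double n (x, y) = (x', y')" by fastforce
  define t where "t = (x^2 + n^2)/(2*y)"
  have "sqrt (K + 1) < n^2 / (2*\<bar>y\<bar>)" using assms(2,4) by (simp add: field_simps)
  also have "\<dots> \<le> \<bar>t\<bar>" unfolding t_def using assms(2) by (simp add: abs_mult divide_right_mono)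
  finally have "(sqrt (K + 1))^2 < \<bar>t\<bar>^2"
    by (rule power_strict_mono) (use assms(3) in auto)
  then have "K < t^2" using assms(3) by simp
  then show ?thesis using cn_double_formulas(1)[OF assms(1,2) xy'] xy' unfolding t_def by simp
qed

lemma slope_square_large:
  fixes x1 x2 y1 y2 \<delta> \<epsilon> :: real
  assumes "0 < \<epsilon>" "0 < \<bar>x2 - x1\<bar>" "\<bar>x2 - x1\<bar> < \<delta>" "2*\<epsilon> \<le> \<bar>y2 - y1\<bar>"
  shows "(2*\<epsilon>/\<delta>)^2 < ((y2 - y1)/(x2 - x1))^2"
proof -
  have "2*\<epsilon>/\<delta> < 2*\<epsilon>/\<bar>x2 - x1\<bar>" using assms by (intro divide_strict_left_mono) auto
  also have "\<dots> \<le> \<bar>(y2 - y1)/(x2 - x1)\<bar>" using assms by (simp add: abs_divide divide_right_mono)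
  finally have "\<bar>2*\<epsilon>/\<delta>\<bar> < \<bar>(y2 - y1)/(x2 - x1)\<bar>" using assms by simp
  then show ?thesis by (metis abs_le_square_iff not_le)
qed

lemma abs_diff_opposite_signs: "(a::real) * b \<le> 0 \<Longrightarrow> \<bar>b - a\<bar> = \<bar>a\<bar> + \<bar>b\<bar>"
  by (auto simp: abs_if mult_le_0_iff)

text \<open>Two points of \<open>2E(\<rat>)\<close> of height at least \<open>\<epsilon>\<close> and close abscissae, after flipping a sign,
  span a chord of slope at least \<open>2 \<surd>(3K + 1)\<close>, whose third intersection lies beyond \<open>K\<close>.\<close>
lemma descent_class_one_chord_large:
  assumes P1: "rat_cn_point n x1 y1" "descent_class n 1 x1" "n < x1" "x1 \<le> K"
    and P2: "rat_cn_point n x2 y2" "descent_class n 1 x2" "n < x2" "x2 \<le> K"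
    and "n \<in> \<rat>" "0 < n" "x1 \<noteq> x2" "0 < \<epsilon>"
    and close: "\<bar>x2 - x1\<bar> < \<epsilon> / sqrt (3*K + 1)" and high: "\<epsilon> \<le> \<bar>y1\<bar>" "\<epsilon> \<le> \<bar>y2\<bar>"
  shows "\<exists>X Y. K < X \<and> rat_cn_point n X Y \<and> descent_class n 1 X"
proof -
  define y2' where "y2' = (if 0 < y1 * y2 then - y2 else y2)"
  have P2': "rat_cn_point n x2 y2'"
    using P2(1) unfolding y2'_def rat_cn_point_def on_cubic_def by auto
  have "2*\<epsilon> \<le> \<bar>y1\<bar> + \<bar>y2'\<bar>" using high by (simp add: y2'_def)
  also have "\<dots> = \<bar>y2' - y1\<bar>"
    by (rule abs_diff_opposite_signs[symmetric]) (auto simp: y2'_def mult_less_0_iff)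
  finally have far: "2*\<epsilon> \<le> \<bar>y2' - y1\<bar>" .
  define l where "l = (y2' - y1)/(x2 - x1)"
  define \<nu> where "\<nu> = y1 - l*x1"
  define x3 where "x3 = l^2 - x1 - x2"
  have K: "0 < K" using assms by linarith
  have "(2*\<epsilon>/(\<epsilon> / sqrt (3*K + 1)))^2 < l^2"
    unfolding l_def by (rule slope_square_large) (use assms far in auto)
  also have "(2*\<epsilon>/(\<epsilon> / sqrt (3*K + 1)))^2 = 4*(3*K + 1)"
    using K \<open>0 < \<epsilon>\<close> by (simp add: power_mult_distrib)
  finally have "K < x3" unfolding x3_def using P1(4) P2(4) K by simp
  moreover have "x1 \<notin> {-n, 0, n}" "x2 \<notin> {-n, 0, n}" using P1(3) P2(3) \<open>0 < n\<close> by auto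
  then have "rat_cn_point n x3 (-(l*x3 + \<nu>))" "descent_class n 1 x3"
    using descent_class_chord[OF P1(1) P2' \<open>x1 \<noteq> x2\<close> l_def \<nu>_def x3_def \<open>n \<in> \<rat>\<close> _ _ _ P1(2) P2(2)]
    by auto
  ultimately show ?thesis by blast
qed

locale cn_doubling =
  fixes n x0 y0 :: real and e0 :: int
  assumes n_rat: "n \<in> \<rat>" and n_pos: "0 < n" and point: "rat_cn_point n x0 y0"
    and v2_x0: "has_v2 (x0 / n) e0" and e0_neg: "e0 < 0"
begin

definition iter :: "nat \<Rightarrow> real \<times> real" where
  "iter j = (cn_double n ^^ j) (x0, y0)"

lemma iter_Suc: "iter (Suc j) = cn_double n (iter j)"
  by (simp add: iter_def)

text \<open>The 2-adic valuation of \<open>x/n\<close> drops by 2 under doubling; this shows \<open>(x\<^sub>0, y\<^sub>0)\<close>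
  has infinite order.\<close>
lemma iter_props:
  "rat_cn_point n (fst (iter j)) (snd (iter j)) \<and> has_v2 (fst (iter j) / n) (e0 - 2 * int j)
     \<and> snd (iter j) \<noteq> 0"
proof (induction j)
  case 0
  have "y0 \<noteq> 0"
    using cn_y_nonzero[OF _ v2_x0] point e0_neg n_pos unfolding rat_cn_point_def by auto
  then show ?case using point v2_x0 by (simp add: iter_def)
next
  case (Suc j)
  obtain x y where xy: "iter j = (x, y)" by fastforce
  obtain x' y' where xy': "cn_double n (x, y) = (x', y')" by fastforce
  have IH: "rat_cn_point n x y" "has_v2 (x / n) (e0 - 2 * int j)" "y \<noteq> 0"
    using Suc.IH xy by auto
  have c: "on_cn_curve n x y" using IH(1) unfolding rat_cn_point_def by simp
  have "x' / n = ((x/n)^2 + 1)^2 / (4*(x/n)*((x/n)^2 - 1))"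
    using cn_double_formulas(1)[OF c IH(3) xy'] cn_double_quotient[OF c IH(3)] n_pos by simp
  then have v: "has_v2 (x' / n) (e0 - 2 * int (Suc j))"
    using has_v2_doubling_map[OF IH(2)] e0_neg by (simp add: algebra_simps)
  moreover have P: "rat_cn_point n x' y'" using descent_class_double(1)[OF IH(1,3) n_rat xy'] .
  moreover have "y' \<noteq> 0"
    using cn_y_nonzero[OF _ v] P e0_neg n_pos unfolding rat_cn_point_def by auto
  ultimately show ?case using xy xy' by (simp add: iter_Suc)
qed

lemma iter_descent_class: "descent_class n 1 (fst (iter (Suc j)))"
proof -
  obtain x y where xy: "iter j = (x, y)" by fastforce
  then show ?thesis
    using descent_class_double(2)[OF _ _ n_rat, of x y] iter_props[of j]
    by (cases "cn_double n (x, y)") (auto simp: iter_Suc)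
qed

lemma iter_x_inj: "fst (iter i) = fst (iter j) \<Longrightarrow> i = j"
  using has_v2_unique iter_props[of i] iter_props[of j] by force

lemma iter_x_gt: "n < fst (iter (Suc j))"
proof -
  obtain r where "fst (iter (Suc j)) - n = 1 * r^2"
    using iter_descent_class[of j] unfolding descent_class_def in_square_class_def by blast
  then have "0 \<le> fst (iter (Suc j)) - n" by simp
  moreover have "fst (iter (Suc j)) / n \<noteq> 1"
    using has_v2_unique[OF _ has_v2_one] iter_props[of "Suc j"] e0_neg by force
  ultimately show ?thesis using n_pos by (cases "fst (iter (Suc j)) = n") auto
qed

lemma iter_height_large:
  assumes bnd: "\<And>j. fst (iter (Suc j)) \<le> K" and "0 \<le> K"
  shows "n^2 / (2 * sqrt (K + 1)) \<le> \<bar>snd (iter (Suc j))\<bar>"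
proof (rule ccontr)
  assume "\<not> ?thesis"
  then have "2 * sqrt (K + 1) * \<bar>snd (iter (Suc j))\<bar> < n^2"
    using \<open>0 \<le> K\<close> by (simp add: field_simps)
  then have "K < fst (iter (Suc (Suc j)))"
    using cn_double_x_large[of n _ _ K] iter_props[of "Suc j"] \<open>0 \<le> K\<close>
    unfolding rat_cn_point_def iter_Suc[of "Suc j"] by (metis prod.collapse)
  then show False using bnd[of "Suc j"] by simp
qed

text \<open>If all doubles stayed in \<open>[n, K]\<close>, they would have height bounded below, and two of
  them would be so close that their chord reaches beyond \<open>K\<close>.\<close>
lemma exists_double_beyond:
  "\<exists>X Y. K < X \<and> rat_cn_point n X Y \<and> descent_class n 1 X"
proof (rule ccontr)
  assume none: "\<not> ?thesis"
  define K' where "K' = max K n"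
  have K': "0 \<le> K'" "n \<le> K'" using n_pos unfolding K'_def by auto
  have bnd: "fst (iter (Suc j)) \<le> K'" for j
  proof (rule ccontr)
    assume "\<not> ?thesis"
    then have "K < fst (iter (Suc j))" unfolding K'_def by simp
    then show False using none iter_props[of "Suc j"] iter_descent_class[of j] by blast
  qed
  define \<epsilon> where "\<epsilon> = n^2 / (2 * sqrt (K' + 1))"
  have "0 < \<epsilon>" unfolding \<epsilon>_def using n_pos K' by simp
  have "\<exists>i j. i \<noteq> j \<and> \<bar>fst (iter (Suc i)) - fst (iter (Suc j))\<bar> < \<epsilon> / sqrt (3*K' + 1)"
  proof (rule inj_bounded_seq_close_terms)
    show "n \<le> fst (iter (Suc j)) \<and> fst (iter (Suc j)) \<le> K'" for j
      using iter_x_gt[of j] bnd[of j] by simp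
    show "inj (\<lambda>j. fst (iter (Suc j)))" by (rule injI) (use iter_x_inj in blast)
    show "0 < \<epsilon> / sqrt (3*K' + 1)" using \<open>0 < \<epsilon>\<close> K' by simp
  qed
  then obtain i j where ij: "i \<noteq> j" "\<bar>fst (iter (Suc j)) - fst (iter (Suc i))\<bar> < \<epsilon> / sqrt (3*K' + 1)"
    by (auto simp: abs_minus_commute)
  then have "fst (iter (Suc i)) \<noteq> fst (iter (Suc j))" using iter_x_inj by blast
  moreover have "rat_cn_point n (fst (iter (Suc l))) (snd (iter (Suc l)))" for l
    using iter_props by blast
  ultimately have "\<exists>X Y. K' < X \<and> rat_cn_point n X Y \<and> descent_class n 1 X"
    using descent_class_one_chord_large[OF _ iter_descent_class iter_x_gt bnd _ iter_descent_class
        iter_x_gt bnd n_rat n_pos _ \<open>0 < \<epsilon>\<close> ij(2)] iter_height_large[OF bnd K'(1)]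
    unfolding \<epsilon>_def by blast
  then show False using none unfolding K'_def by (meson max.strict_boundedE)
qed

end

section \<open>Points of a descent class accumulating at a given point\<close>

lemma cn_chord_third_x_minus:
  assumes "on_cn_curve n X Y" "X \<noteq> P"
  shows "((Y - yq)/(X - P))^2 - P - X - P = ((3*P^2 - n^2)*X + yq^2 - 2*P^3 - 2*Y*yq) / (X - P)^2"
proof -
  have YX: "Y^2 = X^3 - n^2*X" using assms(1) unfolding on_cubic_def by simp
  have "(Y - yq)^2 - (2*P + X)*(X - P)^2 = (3*P^2 - n^2)*X + yq^2 - 2*P^3 - 2*Y*yq"
  proof -
    have "(Y - yq)^2 - (2*P + X)*(X - P)^2 = Y^2 + yq^2 - 2*Y*yq - (2*P + X)*(X - P)^2" by algebra
    also have "\<dots> = (3*P^2 - n^2)*X + yq^2 - 2*P^3 - 2*Y*yq" unfolding YX by algebra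
    finally show ?thesis .
  qed
  moreover have "((Y - yq)/d)^2 - P - X - P = ((Y - yq)^2 - (2*P + X)*d^2) / d^2" if "d \<noteq> 0" for d
    using that by (simp add: field_simps power2_eq_square)
  ultimately show ?thesis using assms(2) by simp
qed

text \<open>Chords from a fixed point \<open>(P, y\<^sub>q)\<close> to points of \<open>E\<^sub>n\<close> with \<open>X \<rightarrow> \<infinity>\<close> have slope
  \<open>\<sim> \<surd>X\<close>, so their third intersection tends to \<open>P\<close> like \<open>1/\<surd>X\<close>.\<close>
lemma cn_chord_third_x_bound:
  assumes c: "on_cn_curve n X Y" and X: "2*P \<le> X" "1 \<le> X" and "0 < P"
  shows "\<bar>((Y - yq)/(X - P))^2 - P - X - P\<bar>
    \<le> 4*(\<bar>3*P^2 - n^2\<bar> + \<bar>yq^2 - 2*P^3\<bar> + 2*\<bar>yq\<bar>) / sqrt X"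
proof -
  define s where "s = sqrt X"
  define C where "C = \<bar>3*P^2 - n^2\<bar> + \<bar>yq^2 - 2*P^3\<bar> + 2*\<bar>yq\<bar>"
  have s: "1 \<le> s" "X = s^2" unfolding s_def using X by auto
  have s3: "s^2 \<le> s^3" "1 \<le> s^3" using s(1) by (simp_all add: power_increasing one_le_power)
  have "Y^2 \<le> (s^3)^2"
  proof -
    have "Y^2 = X^3 - n^2*X" using c unfolding on_cubic_def by simp
    also have "\<dots> \<le> X^3" using X by simp
    also have "X^3 = (s^3)^2" unfolding s(2) by (simp add: power_mult[symmetric] mult.commute)
    finally show ?thesis .
  qed
  then have "\<bar>Y\<bar> \<le> \<bar>s^3\<bar>" by (simp only: abs_le_square_iff)
  then have Y: "\<bar>Y\<bar> \<le> s^3" using s(1) by simp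
  have "\<bar>(3*P^2 - n^2)*X + yq^2 - 2*P^3 - 2*Y*yq\<bar>
      \<le> \<bar>(3*P^2 - n^2)*X\<bar> + \<bar>yq^2 - 2*P^3\<bar> + \<bar>2*Y*yq\<bar>"
    by linarith
  also have "\<dots> = \<bar>3*P^2 - n^2\<bar> * s^2 + \<bar>yq^2 - 2*P^3\<bar> + 2*\<bar>yq\<bar>*\<bar>Y\<bar>"
    using s(2) by (simp add: abs_mult)
  also have "\<dots> \<le> C * s^3"
    unfolding C_def distrib_right
    using s3 Y mult_left_mono[OF s3(2), of "\<bar>yq^2 - 2*P^3\<bar>"]
    by (intro add_mono mult_left_mono) auto
  finally have num: "\<bar>(3*P^2 - n^2)*X + yq^2 - 2*P^3 - 2*Y*yq\<bar> \<le> C * s^3" .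
  have "(s^2/2)^2 \<le> (X - P)^2" using X s(2) by (intro power_mono) auto
  then have den: "s^4/4 \<le> (X - P)^2" by (simp add: power_divide power_mult[symmetric])
  have "\<bar>((Y - yq)/(X - P))^2 - P - X - P\<bar> = \<bar>(3*P^2 - n^2)*X + yq^2 - 2*P^3 - 2*Y*yq\<bar> / (X - P)^2"
    using cn_chord_third_x_minus[OF c] X \<open>0 < P\<close> by (simp add: abs_divide)
  also have "\<dots> \<le> C * s^3 / (s^4/4)"
    using num den s(1) by (intro frac_le) (auto simp: C_def)
  also have "\<dots> = 4*C / s" using s(1) by (simp add: field_simps eval_nat_numeral)
  finally show ?thesis unfolding C_def s_def .
qed

lemma cn_chord_third_x_close:
  assumes "on_cn_curve n X Y" "2*P \<le> X" "1 \<le> X" "0 < P" "0 < \<epsilon>"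
    and "(4*(\<bar>3*P^2 - n^2\<bar> + \<bar>yq^2 - 2*P^3\<bar> + 2*\<bar>yq\<bar>) / \<epsilon>)^2 < X"
  shows "\<bar>((Y - yq)/(X - P))^2 - P - X - P\<bar> < \<epsilon>"
proof -
  define C where "C = 4*(\<bar>3*P^2 - n^2\<bar> + \<bar>yq^2 - 2*P^3\<bar> + 2*\<bar>yq\<bar>)"
  have "C / \<epsilon> < sqrt X"
    using assms(6) real_sqrt_less_mono[OF assms(6)] \<open>0 < \<epsilon>\<close> unfolding C_def by simp
  then have "C / sqrt X < \<epsilon>" using assms(3,5) by (simp add: field_simps)
  then show ?thesis using cn_chord_third_x_bound[OF assms(1-4), of yq] unfolding C_def by linarith
qed

text \<open>For \<open>X\<close> large the chords through \<open>(P, y\<^sub>P)\<close> and \<open>(P, -y\<^sub>P)\<close> land on opposite sides of \<open>P\<close>.\<close>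
lemma cn_chord_third_x_product:
  assumes cP: "on_cn_curve n P yP" and cX: "on_cn_curve n X Y" and ne: "X \<noteq> P"
  shows "(((Y - yP)/(X - P))^2 - P - X - P) * (((Y + yP)/(X - P))^2 - P - X - P)
         = ((P^2 + n^2)^2 - 4*yP^2*X) / (X - P)^2"
proof -
  define d where "d = X - P"
  define c where "c = (2*P + X)*d^2"
  have d0: "d \<noteq> 0" using ne d_def by simp
  have YP: "yP^2 = P^3 - n^2*P" using cP unfolding on_cubic_def by simp
  have YX: "Y^2 = X^3 - n^2*X" using cX unfolding on_cubic_def by simp
  have "((Y - yP)^2 - c) * ((Y + yP)^2 - c) = (Y^2 - yP^2)^2 - 2*c*(Y^2 + yP^2) + c^2" by algebra
  also have "\<dots> = ((P^2 + n^2)^2 - 4*yP^2*X) * d^2" unfolding YX c_def d_def YP by algebra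
  finally have num: "((Y - yP)^2 - c) * ((Y + yP)^2 - c) = ((P^2 + n^2)^2 - 4*yP^2*X) * d^2" .
  have "((Y - yP)/d)^2 - P - X - P = ((Y - yP)^2 - c)/d^2" "((Y + yP)/d)^2 - P - X - P = ((Y + yP)^2 - c)/d^2"
    unfolding c_def using d0 by (simp_all add: field_simps power2_eq_square)
  then show ?thesis using num d0 unfolding d_def[symmetric] by (simp add: power2_eq_square)
qed

text \<open>Points of \<open>2E(\<rat>)\<close> with unbounded abscissa make the translates of \<open>(P, y\<^sub>P)\<close> by them
  accumulate at \<open>P\<close> from both sides, and translation preserves the descent class.\<close>
lemma descent_class_near:
  assumes P: "rat_cn_point n P yP" "yP \<noteq> 0" "descent_class n k P"
    and "n \<in> \<rat>" "k \<in> \<rat>" "0 < n" "n < P"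
    and large: "\<And>K. \<exists>X Y. K < X \<and> rat_cn_point n X Y \<and> descent_class n 1 X"
    and "0 < \<epsilon>"
  shows "\<exists>z. P - \<epsilon> < z \<and> z < P \<and> descent_class n k z"
proof -
  define C where "C = 4*(\<bar>3*P^2 - n^2\<bar> + \<bar>yP^2 - 2*P^3\<bar> + 2*\<bar>yP\<bar>)"
  obtain X Y where XY: "max (max (2*P) 1) (max ((P^2 + n^2)^2 / (4*yP^2)) ((C/\<epsilon>)^2)) < X"
    "rat_cn_point n X Y" "descent_class n 1 X"
    using large by blast
  have X: "2*P \<le> X" "1 \<le> X" "(P^2 + n^2)^2 / (4*yP^2) < X" "(C/\<epsilon>)^2 < X"
    using XY(1) by auto
  have cX: "on_cn_curve n X Y" and cP: "on_cn_curve n P yP"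
    using XY(2) P(1) unfolding rat_cn_point_def by auto
  have ne: "P \<noteq> X" using X \<open>0 < n\<close> \<open>n < P\<close> by auto
  have good: "P - \<epsilon> < z \<and> z < P \<and> descent_class n k z"
    if yq: "yq = yP \<or> yq = -yP" and z: "z = ((Y - yq)/(X - P))^2 - P - X" and below: "z < P" for yq z
  proof -
    have Pq: "rat_cn_point n P yq" using yq P(1) unfolding rat_cn_point_def on_cubic_def by auto
    have "\<bar>z - P\<bar> < \<epsilon>"
      using cn_chord_third_x_close[OF cX X(1,2) _ \<open>0 < \<epsilon>\<close>, of yq] X(4) yq \<open>0 < n\<close> \<open>n < P\<close>
      unfolding z C_def by auto
    moreover have "descent_class n k z"
      using descent_class_chord(2)[OF Pq XY(2) ne refl refl z \<open>n \<in> \<rat>\<close> \<open>k \<in> \<rat>\<close> _ _ P(3) XY(3)]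
        X \<open>0 < n\<close> \<open>n < P\<close> by auto
    ultimately show ?thesis using below by auto
  qed
  define s where "s = ((Y - yP)/(X - P))^2 - P - X"
  define t where "t = ((Y - -yP)/(X - P))^2 - P - X"
  have "(P^2 + n^2)^2 - 4*yP^2*X < 0" using X(3) P(2) by (simp add: field_simps)
  then have "(s - P) * (t - P) < 0"
    using cn_chord_third_x_product[OF cP cX] ne unfolding s_def t_def by (simp add: divide_neg_pos)
  then have "s < P \<or> t < P" by (metis diff_ge_0_iff_ge linorder_not_le mult_nonneg_nonneg)
  then show ?thesis using good[OF _ s_def] good[OF _ t_def] by blast
qed

section \<open>The family of triangles\<close>

lemma less_one_of_sum_squares_less:
  fixes p q :: real
  assumes "0 < q" "q \<le> p" "p * q < 1" "p^2 + q^2 < 1 + p^2 * q^2"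
  shows "p < 1"
proof (rule ccontr)
  assume "\<not> p < 1"
  then have "1 \<le> p^2" by (simp add: one_le_power)
  moreover have "0 < (1 - p^2) * (1 - q^2)" using assms(4) by (simp add: algebra_simps)
  ultimately have "1 < q^2" by (simp add: zero_less_mult_iff)
  have "1 < q"
  proof (rule ccontr)
    assume "\<not> 1 < q"
    then have "q^2 \<le> 1" using assms(1) by (simp add: power_le_one)
    then show False using \<open>1 < q^2\<close> by simp
  qed
  moreover have "1 * q \<le> p * q" using \<open>\<not> p < 1\<close> assms(1) by (intro mult_right_mono) auto
  ultimately have "1 < p * q" by linarith
  then show False using assms(3) by simp
qed

lemma artanh_inj: "\<bar>s\<bar> < 1 \<Longrightarrow> \<bar>t\<bar> < 1 \<Longrightarrow> artanh s = artanh t \<Longrightarrow> s = (t::real)"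
  using artanh_less_artanh[of s t] artanh_less_artanh[of t s]
  by (cases s t rule: linorder_cases) (auto simp: abs_less_iff)

lemma sorted_triples_congruent_eq:
  assumes "b \<le> a" "a < c" "b' \<le> a'" "a' < c'" "hyp_congruent (a, b, c) (a', b', c')"
  shows "(a', b', c') = (a, b, c)"
  using assms unfolding hyp_congruent_def by auto

locale heron_family =
  fixes m :: real
  assumes m_rat: "m \<in> \<rat>" and m_pos: "0 < m" and m_less_one: "m < 1"
begin

definition k :: real where "k = 1 + m^2"
definition n :: real where "n = 2 * m * k"

text \<open>The point \<open>(k\<^sup>2, y\<^sub>P)\<close> of \<open>E\<^sub>n\<close> corresponds to the degenerate parameters \<open>p = 1\<close>, \<open>q = m\<close>,
  \<open>r = 1\<close>; the triangles come from points of its descent class just to its left.\<close>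
definition yP :: real where "yP = k^2 * (1 - m^2)"

lemma k_pos: "0 < k" and n_pos: "0 < n" and k_rat: "k \<in> \<rat>" and n_rat: "n \<in> \<rat>"
  using m_pos m_rat unfolding n_def k_def by (simp_all add: add_pos_nonneg)

lemma m_sq_less_one: "m^2 < 1"
  using m_pos m_less_one by (simp add: power_less_one_iff)

lemma P_point: "rat_cn_point n (k^2) yP"
proof -
  have "k^2 - 4*m^2 = (1 - m^2)^2" unfolding k_def by algebra
  then have "(k^2 * (1 - m^2))^2 = (k^2)^3 - n^2 * k^2" unfolding n_def by algebra
  then show ?thesis unfolding rat_cn_point_def on_cubic_def yP_def using k_rat m_rat by simp
qed

lemma yP_nonzero: "yP \<noteq> 0"
  using m_sq_less_one k_pos unfolding yP_def by simp

lemma P_shifts: "k^2 - n = k * (1 - m)^2" "k^2 + n = k * (1 + m)^2"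
  unfolding n_def k_def by algebra+

lemma n_less_P: "n < k^2"
proof -
  have "0 < k * (1 - m)^2" using k_pos m_less_one by simp
  then show ?thesis using P_shifts(1) by linarith
qed

lemma P_descent_class: "descent_class n k (k^2)"
  unfolding descent_class_def in_square_class_def P_shifts using k_rat m_rat
  by (intro conjI bexI[of _ k] bexI[of _ "1 - m"] bexI[of _ "1 + m"]) (auto simp: power2_eq_square)

lemma double_P_v2: "\<exists>e<0. has_v2 (fst (cn_double n (k^2, yP)) / n) e"
proof -
  obtain x y where xy: "cn_double n (k^2, yP) = (x, y)" by fastforce
  have c: "on_cn_curve n (k^2) yP" using P_point unfolding rat_cn_point_def by simp
  have "((k^2)^2 + n^2) / (2*yP) = (1 + 6*m^2 + m^4) / (2*(1 - m^2))"
  proof -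
    have "(k^2)^2 + n^2 = k^2 * (1 + 6*m^2 + m^4)" unfolding n_def k_def by algebra
    then show ?thesis unfolding yP_def using k_pos by simp
  qed
  then have x: "x = ((1 + 6*m^2 + m^4) / (2*(1 - m^2)))^2"
    using cn_double_formulas(1)[OF c yP_nonzero xy] by simp
  have frac: "(A / (2*B))^2 / (2*m*C) = A^2 / (8*m*C*B^2)" for A B C :: real
    by (simp add: power_divide power_mult_distrib)
  have "x / n = (1 + 6*m^2 + m^4)^2 / (8*m*(1 + m^2)*(1 - m^2)^2)"
    unfolding x n_def k_def by (rule frac)
  then show ?thesis
    using has_v2_doubling_quotient[OF m_rat] m_pos m_sq_less_one xy by simp
qed

lemma exists_double_beyond: "\<exists>X Y. K < X \<and> rat_cn_point n X Y \<and> descent_class n 1 X"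
proof -
  obtain x y where xy: "cn_double n (k^2, yP) = (x, y)" by fastforce
  obtain e where "e < 0" "has_v2 (x / n) e" using double_P_v2 xy by auto
  moreover have "rat_cn_point n x y"
    using descent_class_double(1)[OF P_point yP_nonzero n_rat xy] .
  ultimately interpret cn_doubling n x y e
    using n_rat n_pos by unfold_locales
  show ?thesis by (rule exists_double_beyond)
qed

lemma exists_class_point_near_P:
  "0 < \<epsilon> \<Longrightarrow> \<exists>z. k^2 - \<epsilon> < z \<and> z < k^2 \<and> descent_class n k z"
  by (rule descent_class_near[OF P_point yP_nonzero P_descent_class n_rat k_rat n_pos n_less_P
        exists_double_beyond])

definition params :: "(real \<times> real \<times> real) set" where
  "params = {(p, q, r). p \<in> \<rat> \<and> q \<in> \<rat> \<and> r \<in> \<rat> \<and> 0 < q \<and> q \<le> p \<and> p < 1 \<and> 0 < r \<and>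
     p * q = m \<and> r^2 * (1 + p^2*q^2) = p^2 + q^2}"

lemma params_of_descent_class:
  assumes "descent_class n k z" "z < k^2"
  shows "\<exists>p q r. (p, q, r) \<in> params \<and> r^2 = z / k^2"
proof -
  obtain \<rho> u v where \<rho>: "\<rho> \<in> \<rat>" "z = \<rho>^2" and u: "u \<in> \<rat>" "z + n = k * u^2"
    and v: "v \<in> \<rat>" "z - n = k * v^2"
    using assms(1) unfolding descent_class_def in_square_class_def by auto
  have "0 \<le> k * v^2" using k_pos by simp
  then have "0 < z" using v(2) n_pos by linarith
  define p where "p = (\<bar>u\<bar> + \<bar>v\<bar>) / 2"
  define q where "q = (\<bar>u\<bar> - \<bar>v\<bar>) / 2"
  define r where "r = \<bar>\<rho>\<bar> / k"
  have "k * (u^2 - v^2) = 2 * n" using u(2) v(2) by (simp add: algebra_simps)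
  then have uv: "u^2 - v^2 = 4 * m" using k_pos unfolding n_def by simp
  have pq: "p * q = m" unfolding p_def q_def using uv by (simp add: algebra_simps power2_eq_square)
  have "(\<bar>u\<bar> + \<bar>v\<bar>)^2 + (\<bar>u\<bar> - \<bar>v\<bar>)^2 = 2 * (u^2 + v^2)"
    by (simp add: power2_eq_square algebra_simps)
  then have "p^2 + q^2 = (u^2 + v^2) / 2" unfolding p_def q_def by (simp add: power_divide)
  also have "\<dots> = z / k" using u(2) v(2) k_pos by (simp add: field_simps)
  finally have sum: "p^2 + q^2 = z / k" .
  have E: "1 + p^2*q^2 = k" unfolding k_def using pq by (simp add: power_mult_distrib[symmetric])
  have r2: "r^2 = z / k^2" unfolding r_def \<rho>(2) by (simp add: power_divide)
  have pqr: "r^2 * (1 + p^2*q^2) = p^2 + q^2"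
    unfolding E r2 sum using k_pos by (simp add: power2_eq_square)
  have "\<not> \<bar>u\<bar> \<le> \<bar>v\<bar>" unfolding abs_le_square_iff using uv m_pos by simp
  then have "\<bar>v\<bar> < \<bar>u\<bar>" by simp
  then have q: "0 < q" "q \<le> p" unfolding p_def q_def by auto
  have "p^2 + q^2 < 1 + p^2*q^2"
    unfolding sum E using assms(2) k_pos by (simp add: divide_less_eq power2_eq_square)
  then have "p < 1" using less_one_of_sum_squares_less q pq m_less_one by simp
  moreover have "p \<in> \<rat>" "q \<in> \<rat>" "r \<in> \<rat>"
    unfolding p_def q_def r_def using u v \<rho> k_rat by auto
  moreover have "0 < r" unfolding r_def using \<open>0 < z\<close> \<rho>(2) k_pos by auto
  ultimately show ?thesis unfolding params_def using q pq pqr r2 by blast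
qed

lemma params_bounds:
  assumes "(p, q, r) \<in> params"
  shows "0 < q" "q \<le> p" "p < 1" "0 < r" "r < 1"
proof -
  show "0 < q" "q \<le> p" "p < 1" "0 < r" using assms unfolding params_def by auto
  then show "r < 1" using param_r_less_one[of p q r] assms unfolding params_def by auto
qed

lemma params_r_unbounded:
  assumes "r0 < 1" shows "\<exists>p q r. (p, q, r) \<in> params \<and> r0 < r"
proof -
  define r1 where "r1 = max r0 0"
  have r1: "0 \<le> r1" "r1 < 1" "r0 \<le> r1" unfolding r1_def using assms by auto
  then have "r1^2 < 1" by (simp add: power_less_one_iff)
  then have "0 < k^2 * (1 - r1^2)" using k_pos by simp
  then obtain z where "k^2 - k^2 * (1 - r1^2) < z" "z < k^2" "descent_class n k z"
    using exists_class_point_near_P by blast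
  then have z: "k^2 * r1^2 < z" "z < k^2" "descent_class n k z" by (simp_all add: algebra_simps)
  then obtain p q r where pqr: "(p, q, r) \<in> params" "r^2 = z / k^2"
    using params_of_descent_class by blast
  have "r1^2 < r^2" using z(1) k_pos unfolding pqr(2) by (simp add: field_simps)
  then have "r1 < r" using params_bounds(4)[OF pqr(1)] by (simp add: power_less_imp_less_base)
  then show ?thesis using pqr(1) r1(3) by force
qed

lemma params_infinite: "infinite params"
proof -
  define R where "R = (\<lambda>(p, q, r). r) ` params"
  have R: "x \<in> R \<longleftrightarrow> (\<exists>p q. (p, q, x) \<in> params)" for x
    unfolding R_def by force
  have "R \<noteq> {}" using params_r_unbounded[of 0] R by auto
  moreover have "\<exists>y\<in>R. x < y" if "x \<in> R" for x
    using that params_bounds(5) params_r_unbounded[of x] R by blast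
  ultimately have "infinite R" by (rule infinite_growing)
  then show ?thesis unfolding R_def by blast
qed

definition triangles :: "(real \<times> real \<times> real) set" where
  "triangles = (\<lambda>(p, q, r). (2 * artanh p, 2 * artanh q, 2 * artanh r)) ` params"

lemma triangles_infinite: "infinite triangles"
proof -
  have "inj_on (\<lambda>(p, q, r). (2 * artanh p, 2 * artanh q, 2 * artanh r)) params"
  proof (rule inj_onI)
    fix x y
    assume "x \<in> params" "y \<in> params"
      and eq: "(\<lambda>(p, q, r). (2 * artanh p, 2 * artanh q, 2 * artanh r)) x
        = (\<lambda>(p, q, r). (2 * artanh p, 2 * artanh q, 2 * artanh r)) y"
    moreover obtain p q r p' q' r' where "x = (p, q, r)" "y = (p', q', r')" by (cases x, cases y)
    ultimately have "(p, q, r) \<in> params" "(p', q', r') \<in> params"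
      "artanh p = artanh p'" "artanh q = artanh q'" "artanh r = artanh r'" by auto
    then have "p = p'" "q = q'" "r = r'"
      using params_bounds[of p q r] params_bounds[of p' q' r'] artanh_inj by auto
    then show "x = y" using \<open>x = (p, q, r)\<close> \<open>y = (p', q', r')\<close> by simp
  qed
  then show ?thesis unfolding triangles_def using params_infinite finite_imageD by blast
qed

lemma triangles_props:
  assumes "(a, b, c) \<in> triangles"
  shows "hyp_heron a b c" "has_right_angle a b c"
    "cos (hyp_area a b c) = (1 - m^2) / (1 + m^2)" "sin (hyp_area a b c) = 2 * m / (1 + m^2)"
    "b \<le> a" "a < c"
proof -
  obtain p q r where pqr: "(p, q, r) \<in> params" and abc: "a = 2 * artanh p" "b = 2 * artanh q" "c = 2 * artanh r"
    using assms unfolding triangles_def by auto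
  note bnd = params_bounds[OF pqr]
  have Q: "p \<in> \<rat>" "q \<in> \<rat>" "r \<in> \<rat>" and m: "p * q = m"
    and eq: "r^2 * (1 + p^2*q^2) = p^2 + q^2" using pqr unfolding params_def by auto
  have p: "0 < p" "p < 1" and q: "0 < q" "q < 1" using bnd by auto
  note heron = hyp_heron_param[OF Q p q bnd(4) eq, folded abc]
  note area = cos_sin_hyp_area_param[OF p q bnd(4) eq, folded abc, unfolded m]
  show "hyp_heron a b c" "has_right_angle a b c" "a < c" using heron by auto
  show "cos (hyp_area a b c) = (1 - m^2) / (1 + m^2)" "sin (hyp_area a b c) = 2 * m / (1 + m^2)"
    using area by auto
  show "b \<le> a" unfolding abc using artanh_less_artanh[of q p] bnd by (cases "q = p") auto
qed

lemma triangles_congruent_eq: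
  assumes "t \<in> triangles" "u \<in> triangles" "hyp_congruent t u"
  shows "t = u"
proof -
  obtain a b c a' b' c' where "t = (a, b, c)" "u = (a', b', c')" by (cases t, cases u)
  then show ?thesis
    using sorted_triples_congruent_eq[of b a c b' a' c'] triangles_props(5,6) assms by auto
qed

end

theorem mainTheorem3:
  fixes m :: real
  assumes "m \<in> \<rat>" and "0 < m" and "m < 1"
  shows "\<exists>S :: (real \<times> real \<times> real) set. infinite S \<and>
    (\<forall>(a, b, c) \<in> S. hyp_heron a b c \<and> has_right_angle a b c \<and>
        cos (hyp_area a b c) = (1 - m\<^sup>2) / (1 + m\<^sup>2) \<and>
        sin (hyp_area a b c) = 2 * m / (1 + m\<^sup>2)) \<and>
    (\<forall>t \<in> S. \<forall>u \<in> S. t \<noteq> u \<longrightarrow> \<not> hyp_congruent t u)"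
proof -
  interpret heron_family m using assms by unfold_locales
  show ?thesis
  proof (intro exI[of _ triangles] conjI)
    show "infinite triangles" by (rule triangles_infinite)
    show "\<forall>(a, b, c) \<in> triangles. hyp_heron a b c \<and> has_right_angle a b c \<and>
        cos (hyp_area a b c) = (1 - m\<^sup>2) / (1 + m\<^sup>2) \<and> sin (hyp_area a b c) = 2 * m / (1 + m\<^sup>2)"
      using triangles_props(1-4) by auto
    show "\<forall>t \<in> triangles. \<forall>u \<in> triangles. t \<noteq> u \<longrightarrow> \<not> hyp_congruent t u"
      using triangles_congruent_eq by blast
  qed
qed

end
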